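(* Let $g\in\breve{\mathcal C}$, $0<\alpha\le\sigma(g)$, $\beta:=\inf g^{-1}(\{0\})$ and $\gamma:=\int g$. Then: (a) $\alpha\le2\gamma\le\beta\le1$, and $\alpha=2\gamma\implies 2\gamma=\beta\implies\int Tg=\frac13$; (b) the derivative $(Tg)'\colon[0,1]\to(-\infty,0]$ exists and is continuous, strictly increasing and concave; (c) $Tg\in\breve{\mathcal D}^\sharp$ with $\sigma(Tg)=\frac\gamma\beta$; (d) $\frac\beta\gamma(x-1)\le(Tg)'(x)\le\frac\alpha\gamma(x-1)$ for all $x\in[0,1]$; (e) $\int Tg\le\frac13$; (f) $\alpha\beta-4\alpha\gamma+4\gamma^2\le6(\beta-\alpha)\gamma\int Tg$.
   Context: "Decreasing" means non-increasing; $\int f:=\int_0^1 f(x)\,dx$. $\mathcal E$: measurable decreasing $f\colon[0,1]\to[0,\infty)$ with $f(0)=1$ and $\int f>0$. $\mathcal C$: continuous $f\in\mathcal E$ with $f(1)=0$; $\breve{\mathcal C}$: convex $f\in\mathcal C$. $\mathcal D$: strictly decreasing $f\in\mathcal C$. $\mathcal D'$: $f\in\mathcal D$ continuously differentiable on $(0,1]$. $\mathcal D^\sharp$: $f\in\mathcal D'$ with $f'(1)=0$ and $\lim_{x\to0}f'(x)$ existing in $(-\infty,0]$; $\breve{\mathcal D}^\sharp:=\mathcal D^\sharp\cap\breve{\mathcal C}$. For $g\in\breve{\mathcal C}$, the stride is $\sigma(g):=\sup\{\alpha\ge0:\ \alpha-x\le\alpha g(x)\ \forall x\in[0,1]\}$.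 For $g\in\mathcal E$, $g^*(y):=\sup\{x\in[0,1]:g(x)\ge y\}$. $T$ on $\mathcal E$: $(Tf)(x)=\frac{\int_x^1f^*}{\int f}$. *)

theory Defs
  imports "HOL-Analysis.Analysis"
begin

text \<open>Functions are considered on [0,1]; values outside are irrelevant.
 Integrals are over [0,1]. "Decreasing" means non-increasing.\<close>

definition decreasing01 :: "(real \<Rightarrow> real) \<Rightarrow> bool" where
  "decreasing01 f \<longleftrightarrow> (\<forall>x\<in>{0..1}. \<forall>y\<in>{0..1}. x \<le> y \<longrightarrow> f y \<le> f x)"

definition classE :: "(real \<Rightarrow> real) \<Rightarrow> bool" where
  "classE f \<longleftrightarrow> f \<in> borel_measurable (lebesgue_on {0..1}) \<and> decreasing01 f
     \<and> (\<forall>x\<in>{0..1}. 0 \<le> f x) \<and> f 0 = 1 \<and> integral {0..1} f > 0"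

definition classC :: "(real \<Rightarrow> real) \<Rightarrow> bool" where
  "classC f \<longleftrightarrow> classE f \<and> continuous_on {0..1} f \<and> f 1 = 0"

definition classCconv :: "(real \<Rightarrow> real) \<Rightarrow> bool" where
  "classCconv f \<longleftrightarrow> classC f \<and> convex_on {0..1} f"

definition classD :: "(real \<Rightarrow> real) \<Rightarrow> bool" where
  "classD f \<longleftrightarrow> classC f \<and> (\<forall>x\<in>{0..1}. \<forall>y\<in>{0..1}. x < y \<longrightarrow> f y < f x)"

definition classD' :: "(real \<Rightarrow> real) \<Rightarrow> bool" where
  "classD' f \<longleftrightarrow> classD f \<and> (\<exists>f'. (\<forall>x\<in>{0<..1}. (f has_real_derivative f' x) (at x within {0..1}))
      \<and> continuous_on {0<..1} f')"

definition classDsharp :: "(real \<Rightarrow> real) \<Rightarrow> bool" where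
  "classDsharp f \<longleftrightarrow> classD f \<and> (\<exists>f'. (\<forall>x\<in>{0<..1}. (f has_real_derivative f' x) (at x within {0..1}))
      \<and> continuous_on {0<..1} f' \<and> f' 1 = 0 \<and> (\<exists>L\<le>0. (f' \<longlongrightarrow> L) (at_right 0)))"

definition classDsharpconv :: "(real \<Rightarrow> real) \<Rightarrow> bool" where
  "classDsharpconv f \<longleftrightarrow> classDsharp f \<and> classCconv f"

definition stride :: "(real \<Rightarrow> real) \<Rightarrow> real" where
  "stride g = Sup {a. 0 \<le> a \<and> (\<forall>x\<in>{0..1}. a - x \<le> a * g x)}"

definition gstar :: "(real \<Rightarrow> real) \<Rightarrow> real \<Rightarrow> real" where
  "gstar g y = Sup {x\<in>{0..1}. y \<le> g x}"

definition T :: "(real \<Rightarrow> real) \<Rightarrow> real \<Rightarrow> real" where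
  "T f x = integral {x..1} (gstar f) / integral {0..1} f"

end

theory Submission
  imports Defs
begin

text \<open>
  Let \<open>\<phi>\<close> be the inverse of \<open>g\<close> on \<open>[0, \<beta>]\<close>. It is continuous, convex and strictly
  decreasing, lies between the lines \<open>\<alpha> (1 - y)\<close> and \<open>\<beta> (1 - y)\<close>, and, by Fubini applied
  to the region under the graph of \<open>g\<close>, has the same integral \<open>\<gamma>\<close> as \<open>g\<close>.
  Since \<open>g\<^sup>*\<close> agrees with \<open>\<phi>\<close> off \<open>{0}\<close>, \<open>T g x = \<integral>\<^sub>x\<^sup>1 \<phi> / \<gamma>\<close>, so
  \<open>(T g)' = - \<phi> / \<gamma>\<close>; this gives (b) and (d), and shows that \<open>T g\<close> is convex and lies
  above its tangent at \<open>0\<close>, whose slope \<open>- \<beta> / \<gamma>\<close> determines the stride.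
  Integrating by parts, \<open>\<integral> T g = J / \<gamma>\<close> with \<open>J = \<integral> y \<phi>(y) dy\<close>. If \<open>\<psi>\<close> has the
  same integral as \<open>\<phi>\<close> and \<open>\<phi> - \<psi>\<close> changes sign only once, from negative to positive,
  then \<open>\<integral> y \<psi>(y) dy \<le> J\<close>. Convexity of \<open>\<phi>\<close> yields such a single sign change against
  \<open>2 \<gamma> (1 - y)\<close> (in the opposite direction, giving (e)) and against \<open>\<alpha> (1 - y)\<close> plus a tent
  of height \<open>\<beta> - \<alpha>\<close> and base \<open>(2 \<gamma> - \<alpha>) / (\<beta> - \<alpha>)\<close> (giving (f)). The equality cases
  hold because a continuous nonnegative function with integral zero vanishes.
\<close>


lemma le_strideD:
  assumes "0 \<le> a" "a \<le> stride f" "x \<in> {0..1}"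
  shows "a - x \<le> a * f x"
proof (rule ccontr)
  assume "\<not> a - x \<le> a * f x"
  then have x_lt: "x < a * (1 - f x)" by (simp add: algebra_simps)
  moreover have "0 \<le> x" using assms(3) by simp
  ultimately have "0 < a * (1 - f x)" by linarith
  with assms(1) have pos: "0 < 1 - f x" by (auto simp: zero_less_mult_iff)
  have "stride f \<le> x / (1 - f x)"
    unfolding stride_def
  proof (rule cSup_least)
    fix b assume "b \<in> {b. 0 \<le> b \<and> (\<forall>x\<in>{0..1}. b - x \<le> b * f x)}"
    then have "b - x \<le> b * f x" using assms(3) by auto
    then show "b \<le> x / (1 - f x)" using pos by (simp add: field_simps)
  qed auto
  with assms(2) have "a \<le> x / (1 - f x)" by simp
  with pos have "a * (1 - f x) \<le> x" by (simp add: field_simps)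
  with x_lt show False by simp
qed

lemma stride_eq_inverse_slope:
  fixes f :: "real \<Rightarrow> real"
  assumes s: "0 < s" and f0: "f 0 = 1"
    and above_tangent: "\<And>x. x \<in> {0..1} \<Longrightarrow> 1 - s * x \<le> f x"
    and deriv: "(f has_real_derivative - s) (at 0 within {0..1})"
  shows "stride f = 1 / s"
  unfolding stride_def
proof (rule cSup_eq_maximum)
  show "1 / s \<in> {a. 0 \<le> a \<and> (\<forall>x\<in>{0..1}. a - x \<le> a * f x)}"
    using above_tangent s by (auto simp: field_simps)
next
  fix a assume "a \<in> {a. 0 \<le> a \<and> (\<forall>x\<in>{0..1}. a - x \<le> a * f x)}"
  then have a: "0 \<le> a" "\<And>x. x \<in> {0..1} \<Longrightarrow> a - x \<le> a * f x" by auto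
  show "a \<le> 1 / s"
  proof (cases "a = 0")
    case True
    with s show ?thesis by simp
  next
    case False
    with a(1) have a_pos: "0 < a" by simp
    have "((\<lambda>y. (f y - f 0) / (y - 0)) \<longlongrightarrow> - s) (at_right 0)"
      using deriv by (simp add: has_field_derivative_iff at_within_Icc_at_right)
    moreover have "\<forall>\<^sub>F y in at_right 0. - 1 / a \<le> (f y - f 0) / (y - 0)"
      using eventually_at_right_real[OF zero_less_one]
    proof eventually_elim
      case (elim y)
      then have "a - y \<le> a * f y" using a(2) by auto
      with a_pos elim f0 show ?case by (simp add: field_simps)
    qed
    ultimately have "- 1 / a \<le> - s"
      by (rule tendsto_lowerbound) simp
    with a_pos s show ?thesis by (simp add: field_simps)
  qed
qed

lemma convex_combination_in_Icc:
  fixes a b x y t :: real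
  assumes "x \<in> {a..b}" "y \<in> {a..b}" "0 \<le> t" "t \<le> 1"
  shows "(1 - t) * x + t * y \<in> {a..b}"
  using convexD[OF convex_real_interval(5), where u = "1 - t" and v = t] assms by simp

lemma convex_on_add_affine:
  fixes f :: "real \<Rightarrow> real"
  assumes "convex_on S f"
  shows "convex_on S (\<lambda>x. f x + a * x + b)"
proof -
  have "convex_on S (\<lambda>x. a * x + b)"
    unfolding convex_on_def
  proof (intro conjI ballI allI impI)
    fix x y u v :: real assume "u + v = 1"
    have "u * (a * x + b) + v * (a * y + b) = a * (u *\<^sub>R x + v *\<^sub>R y) + (u + v) * b"
      by (simp add: algebra_simps)
    with \<open>u + v = 1\<close> have "u * (a * x + b) + v * (a * y + b) = a * (u *\<^sub>R x + v *\<^sub>R y) + b"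
      by simp
    then show "a * (u *\<^sub>R x + v *\<^sub>R y) + b \<le> u * (a * x + b) + v * (a * y + b)" by simp
  qed (rule convex_on_imp_convex[OF assms])
  with assms show ?thesis by (simp add: add.assoc convex_on_add)
qed

lemma has_integral_quadratic:
  fixes c0 c1 c2 :: real
  assumes "a \<le> b"
  shows "((\<lambda>y. c0 + c1 * y + c2 * y^2) has_integral
          c0 * (b - a) + c1 * (b^2 - a^2) / 2 + c2 * (b^3 - a^3) / 3) {a..b}"
proof -
  have "((\<lambda>y. c0 + c1 * y + c2 * y^2) has_integral
     (c0 * b + c1 * b^2 / 2 + c2 * b^3 / 3) - (c0 * a + c1 * a^2 / 2 + c2 * a^3 / 3)) {a..b}"
  proof (rule fundamental_theorem_of_calculus[OF assms])
    fix x assume "x \<in> {a..b}"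
    show "((\<lambda>y. c0 * y + c1 * y^2 / 2 + c2 * y^3 / 3) has_vector_derivative
        c0 + c1 * x + c2 * x^2) (at x within {a..b})"
      unfolding has_real_derivative_iff_has_vector_derivative[symmetric]
      by (auto intro!: derivative_eq_intros simp: power2_eq_square)
  qed
  then show ?thesis by (simp add: algebra_simps diff_divide_distrib)
qed

lemma has_integral_ramp:
  fixes c :: real
  shows "((\<lambda>y. c * (1 - y)) has_integral c / 2) {0..1}"
    and "((\<lambda>y. y * (c * (1 - y))) has_integral c / 6) {0..1}"
proof -
  show "((\<lambda>y. c * (1 - y)) has_integral c / 2) {0..1}"
    using has_integral_quadratic[of 0 1 c "- c" 0] by (simp add: algebra_simps)
  show "((\<lambda>y. y * (c * (1 - y))) has_integral c / 6) {0..1}"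
    using has_integral_quadratic[of 0 1 0 c "- c"] by (simp add: algebra_simps power2_eq_square)
qed

lemma has_integral_tent:
  fixes t :: real
  assumes "0 < t" "t \<le> 1"
  shows "((\<lambda>y. max 0 (1 - y / t)) has_integral t / 2) {0..1}"
    and "((\<lambda>y. y * max 0 (1 - y / t)) has_integral t^2 / 6) {0..1}"
proof -
  have tent_eq: "max 0 (1 - y / t) = (if y \<le> t then 1 - y / t else 0)" for y
    using assms by (auto simp: field_simps)
  have vanish: "(f has_integral 0) {t..1}" if "\<And>y. t \<le> y \<Longrightarrow> f y = 0" for f :: "real \<Rightarrow> real"
    using that by (intro has_integral_eq[OF _ has_integral_0]) auto
  have "((\<lambda>y. 1 + (- 1 / t) * y + 0 * y^2) has_integral t / 2) {0..t}"
    using has_integral_quadratic[of 0 t 1 "- 1 / t" 0] assms by (simp add: power2_eq_square)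
  then have "((\<lambda>y. max 0 (1 - y / t)) has_integral t / 2) {0..t}"
    by (rule has_integral_eq[rotated]) (simp add: tent_eq)
  from has_integral_combine[OF _ _ this vanish] assms
  show "((\<lambda>y. max 0 (1 - y / t)) has_integral t / 2) {0..1}"
    by (simp add: tent_eq)
  have "((\<lambda>y. 0 + 1 * y + (- 1 / t) * y^2) has_integral t^2 / 6) {0..t}"
    using has_integral_quadratic[of 0 t 0 1 "- 1 / t"] assms
    by (simp add: power2_eq_square power3_eq_cube)
  then have "((\<lambda>y. y * max 0 (1 - y / t)) has_integral t^2 / 6) {0..t}"
    by (rule has_integral_eq[rotated]) (simp add: tent_eq algebra_simps power2_eq_square)
  from has_integral_combine[OF _ _ this vanish] assms
  show "((\<lambda>y. y * max 0 (1 - y / t)) has_integral t^2 / 6) {0..1}"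
    by (simp add: tent_eq)
qed

lemma integral_antimono_on_bounds:
  fixes f :: "real \<Rightarrow> real"
  assumes cont: "continuous_on {x..y} f" and anti: "antimono_on {x..y} f" and "x \<le> y"
  shows "(y - x) * f y \<le> integral {x..y} f" and "integral {x..y} f \<le> (y - x) * f x"
proof -
  have int: "f integrable_on {x..y}" using cont by (rule integrable_continuous_interval)
  have "f y \<le> f u" "f u \<le> f x" if "u \<in> {x..y}" for u
    using monotone_onD[OF anti] that \<open>x \<le> y\<close> by auto
  then have "integral {x..y} (\<lambda>_. f y) \<le> integral {x..y} f"
    by (intro integral_le int) auto
  with \<open>x \<le> y\<close> show "(y - x) * f y \<le> integral {x..y} f" by simp
  have "integral {x..y} f \<le> integral {x..y} (\<lambda>_. f x)"
    using \<open>\<And>u. u \<in> {x..y} \<Longrightarrow> f u \<le> f x\<close> by (intro integral_le int) auto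
  with \<open>x \<le> y\<close> show "integral {x..y} f \<le> (y - x) * f x" by simp
qed

lemma convex_on_tail_integral:
  fixes f :: "real \<Rightarrow> real"
  assumes cont: "continuous_on {a..b} f" and anti: "antimono_on {a..b} f"
  shows "convex_on {a..b} (\<lambda>x. integral {x..b} f)"
proof (rule convex_on_linorderI)
  fix t x y :: real
  assume t: "0 < t" "t < 1" and x: "x \<in> {a..b}" and y: "y \<in> {a..b}" and "x < y"
  define z where "z = (1 - t) * x + t * y"
  have "z - x = t * (y - x)" "y - z = (1 - t) * (y - x)"
    by (simp_all add: z_def algebra_simps)
  with t \<open>x < y\<close> have xz: "x \<le> z" and zy: "z \<le> y"
    by (metis diff_ge_0_iff_ge less_eq_real_def mult_pos_pos diff_gt_0_iff_gt)+
  have sub: "{u..v} \<subseteq> {a..b}" if "a \<le> u" "v \<le> b" for u v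
    using that by auto
  have split: "integral {u..b} f = integral {u..v} f + integral {v..b} f"
    if "a \<le> u" "u \<le> v" "v \<le> b" for u v
    using that Henstock_Kurzweil_Integration.integral_combine[of u v b f]
      integrable_continuous_interval[OF continuous_on_subset[OF cont sub[of u b]]]
    by simp
  have bounds: "(v - u) * f v \<le> integral {u..v} f" "integral {u..v} f \<le> (v - u) * f u"
    if "a \<le> u" "u \<le> v" "v \<le> b" for u v
    using that continuous_on_subset[OF cont sub] monotone_on_subset[OF anti sub]
    by (intro integral_antimono_on_bounds; simp)+
  have "(1 - t) * ((z - x) * f z) = t * ((y - z) * f z)"
    by (simp add: z_def algebra_simps)
  moreover have "(1 - t) * ((z - x) * f z) \<le> (1 - t) * integral {x..z} f"
    using bounds(1)[of x z] x y xz zy t by (intro mult_left_mono) auto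
  moreover have "t * integral {z..y} f \<le> t * ((y - z) * f z)"
    using bounds(2)[of z y] x y xz zy t by (intro mult_left_mono) auto
  ultimately have "integral {z..b} f \<le> (1 - t) * integral {x..b} f + t * integral {y..b} f"
    using split[of x z] split[of z y] x y xz zy by (simp add: algebra_simps)
  then show "integral {(1 - t) *\<^sub>R x + t *\<^sub>R y..b} f
      \<le> (1 - t) * integral {x..b} f + t * integral {y..b} f"
    by (simp add: z_def)
qed simp

lemma has_integral_generalized_inverse:
  fixes G P :: "real \<Rightarrow> real"
  assumes G_meas: "G \<in> borel_measurable borel"
    and G_range: "\<And>x. x \<in> {0..1} \<Longrightarrow> 0 \<le> G x \<and> G x \<le> 1"
    and P_range: "\<And>y. y \<in> {0<..1} \<Longrightarrow> 0 \<le> P y \<and> P y \<le> 1"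
    and galois: "\<And>x y. x \<in> {0..1} \<Longrightarrow> y \<in> {0<..1} \<Longrightarrow> y \<le> G x \<longleftrightarrow> x \<le> P y"
    and G_int: "(G has_integral I) {0..1}" and P_int: "(P has_integral J) {0<..1}"
  shows "I = J"
proof -
  define A where "A = {p. fst p \<in> {0..1::real} \<and> 0 < snd p \<and> snd p \<le> G (fst p)}"
  have "Measurable.pred (lborel \<Otimes>\<^sub>M lborel) (\<lambda>p. fst p \<in> {0..1::real} \<and> 0 < snd p \<and> snd p \<le> G (fst p))"
    using G_meas by measurable
  then have meas: "(\<lambda>p. indicator A p :: ennreal) \<in> borel_measurable (lborel \<Otimes>\<^sub>M lborel)"
    by (simp add: pred_def space_pair_measure A_def)
  have sections_G: "(\<integral>\<^sup>+ y. indicator A (x, y) \<partial>lborel) = ennreal (G x) * indicator {0..1} x" for x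
  proof (cases "x \<in> {0..1}")
    case True
    then have "(\<lambda>y. indicator A (x, y) :: ennreal) = indicator {0<..G x}"
      by (auto simp: A_def indicator_def fun_eq_iff)
    with True G_range[OF True] show ?thesis by simp
  next
    case False
    then have "(\<lambda>y. indicator A (x, y) :: ennreal) = (\<lambda>y. 0)"
      by (auto simp: A_def indicator_def fun_eq_iff)
    with False show ?thesis by simp
  qed
  have sections_P: "(\<integral>\<^sup>+ x. indicator A (x, y) \<partial>lborel) = ennreal (P y) * indicator {0<..1} y" for y
  proof (cases "y \<in> {0<..1}")
    case True
    then have "(\<lambda>x. indicator A (x, y) :: ennreal) = indicator {0..P y}"
      using P_range[OF True] galois[of _ y] by (auto simp: A_def indicator_def fun_eq_iff)
    with True P_range[OF True] show ?thesis by simp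
  next
    case False
    then have "(\<lambda>x. indicator A (x, y) :: ennreal) = (\<lambda>x. 0)"
      using G_range by (force simp: A_def indicator_def fun_eq_iff)
    with False show ?thesis by simp
  qed
  have "ennreal I = (\<integral>\<^sup>+ x. ennreal (G x) * indicator {0..1} x \<partial>lborel)"
    by (rule nn_integral_has_integral_lebesgue'[OF _ G_int, symmetric]) (use G_range in auto)
  also have "\<dots> = (\<integral>\<^sup>+ y. ennreal (P y) * indicator {0<..1} y \<partial>lborel)"
    using lborel_pair.Fubini'[of "\<lambda>x y. indicator A (x, y)"] meas
    by (simp add: sections_G sections_P)
  also have "\<dots> = ennreal J"
    by (rule nn_integral_has_integral_lebesgue'[OF _ P_int]) (use P_range in auto)
  finally have "ennreal I = ennreal J" .
  moreover have "0 \<le> I" using has_integral_nonneg[OF G_int] G_range by auto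
  moreover have "0 \<le> J" using has_integral_nonneg[OF P_int] P_range by auto
  ultimately show ?thesis by simp
qed

lemma has_integral_first_moment_nonneg:
  fixes d :: "real \<Rightarrow> real"
  assumes zero_mean: "(d has_integral 0) {a..b}"
    and moment: "((\<lambda>y. y * d y) has_integral K) {a..b}"
    and sign_change: "\<And>x y. x \<in> {a..b} \<Longrightarrow> y \<in> {a..b} \<Longrightarrow> x \<le> y \<Longrightarrow> 0 < d x \<Longrightarrow> 0 \<le> d y"
  shows "0 \<le> K"
proof -
  define S where "S = {x \<in> {a..b}. 0 < d x} \<union> {b}"
  define c where "c = Inf S"
  have bdd: "bdd_below S" unfolding S_def by (auto intro: bdd_belowI[of _ "min a b"])
  have "0 \<le> (y - c) * d y" if y: "y \<in> {a..b}" for y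
  proof (cases "0 < d y")
    case True
    with y have "c \<le> y" unfolding c_def by (intro cInf_lower bdd) (simp add: S_def)
    with True show ?thesis by simp
  next
    case False
    have "y \<le> c" if "d y < 0"
      unfolding c_def
    proof (rule cInf_greatest)
      fix z assume "z \<in> S"
      then show "y \<le> z"
        using sign_change[of z y] y \<open>d y < 0\<close> by (force simp: S_def)
    qed (simp add: S_def)
    with False show ?thesis by (cases "d y < 0") (auto simp: mult_nonpos_nonpos)
  qed
  moreover have "((\<lambda>y. (y - c) * d y) has_integral K) {a..b}"
    using has_integral_diff[OF moment has_integral_mult_right[OF zero_mean, of c]]
    by (simp add: algebra_simps)
  ultimately show ?thesis by (rule has_integral_nonneg[rotated])
qed

lemma has_integral_0_Icc_imp_0:
  fixes f :: "real \<Rightarrow> real"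
  assumes "continuous_on {a..b} f" and "\<And>x. x \<in> {a..b} \<Longrightarrow> 0 \<le> f x"
    and "(f has_integral 0) {a..b}" and "a < b" and "x \<in> {a..b}"
  shows "f x = 0"
  using has_integral_0_cbox_imp_0[of a b f x] assms by auto

locale convex_stride_profile =
  fixes g :: "real \<Rightarrow> real" and \<alpha> \<beta> \<gamma> :: real
  assumes g_class: "classCconv g"
    and \<alpha>_pos: "0 < \<alpha>" and \<alpha>_le_stride: "\<alpha> \<le> stride g"
    and \<beta>_def: "\<beta> = Inf {x\<in>{0..1}. g x = 0}"
    and \<gamma>_def: "\<gamma> = integral {0..1} g"
begin

lemma g_cont: "continuous_on {0..1} g"
  and g_convex: "convex_on {0..1} g"
  and g_0: "g 0 = 1" and g_1: "g 1 = 0"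
  and g_nonneg: "x \<in> {0..1} \<Longrightarrow> 0 \<le> g x"
  and g_antimono: "x \<in> {0..1} \<Longrightarrow> y \<in> {0..1} \<Longrightarrow> x \<le> y \<Longrightarrow> g y \<le> g x"
  using g_class unfolding classCconv_def classC_def classE_def decreasing01_def by auto

lemma g_le_1: "x \<in> {0..1} \<Longrightarrow> g x \<le> 1"
  using g_antimono[of 0 x] g_0 by simp

lemma \<alpha>_line_below_g: "x \<in> {0..1} \<Longrightarrow> \<alpha> - x \<le> \<alpha> * g x"
  using le_strideD[OF less_imp_le[OF \<alpha>_pos] \<alpha>_le_stride] .

lemma \<beta>_mem: "\<beta> \<in> {0..1}" and g_\<beta>: "g \<beta> = 0"
proof -
  let ?Z = "{x\<in>{0..1}. g x = 0}"
  have "closed ?Z" by (rule continuous_closed_preimage_constant[OF g_cont]) auto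
  moreover have "?Z \<noteq> {}" using g_1 by auto
  moreover have "bdd_below ?Z" by (auto intro: bdd_belowI[of _ 0])
  ultimately have "\<beta> \<in> ?Z" unfolding \<beta>_def by (rule closed_contains_Inf[rotated 2])
  then show "\<beta> \<in> {0..1}" "g \<beta> = 0" by auto
qed

lemma g_pos: "x \<in> {0..1} \<Longrightarrow> x < \<beta> \<Longrightarrow> 0 < g x"
proof (rule ccontr)
  assume x: "x \<in> {0..1}" "x < \<beta>" "\<not> 0 < g x"
  then have "g x = 0" using g_nonneg[of x] by simp
  with x(1) have "\<beta> \<le> x" unfolding \<beta>_def by (intro cInf_lower) (auto intro: bdd_belowI[of _ 0])
  with x(2) show False by simp
qed

lemma g_eq_0: "x \<in> {0..1} \<Longrightarrow> \<beta> \<le> x \<Longrightarrow> g x = 0"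
  using g_antimono[of \<beta> x] \<beta>_mem g_\<beta> g_nonneg[of x] by simp

lemma \<alpha>_le_\<beta>: "\<alpha> \<le> \<beta>"
  using \<alpha>_line_below_g[OF \<beta>_mem] g_\<beta> by simp

lemma \<beta>_pos: "0 < \<beta>"
  using \<alpha>_pos \<alpha>_le_\<beta> by simp

lemma g_strict_antimono: "0 \<le> x \<Longrightarrow> x < y \<Longrightarrow> y \<le> \<beta> \<Longrightarrow> g y < g x"
proof -
  assume xy: "0 \<le> x" "x < y" "y \<le> \<beta>"
  define t where "t = (y - x) / (\<beta> - x)"
  have t: "0 < t" "t \<le> 1" using xy by (auto simp: t_def field_simps)
  have "t * (\<beta> - x) = y - x" using xy by (simp add: t_def)
  then have y_eq: "y = (1 - t) * x + t * \<beta>" by (simp add: algebra_simps)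
  have "g y \<le> (1 - t) * g x + t * g \<beta>"
    unfolding y_eq using xy t \<beta>_mem by (intro convex_onD[OF g_convex, simplified]) auto
  also have "\<dots> < g x" using t g_\<beta> g_pos[of x] xy \<beta>_mem by simp
  finally show ?thesis .
qed

lemma g_le_chord: "x \<in> {0..\<beta>} \<Longrightarrow> g x \<le> 1 - x / \<beta>"
proof -
  assume x: "x \<in> {0..\<beta>}"
  have x_eq: "x = (1 - x / \<beta>) * 0 + (x / \<beta>) * \<beta>" using \<beta>_pos by simp
  have "g x \<le> (1 - x / \<beta>) * g 0 + (x / \<beta>) * g \<beta>"
    using x \<beta>_pos \<beta>_mem by (subst x_eq, intro convex_onD[OF g_convex, simplified]) auto
  then show ?thesis using g_0 g_\<beta> by simp
qed

lemma g_le_g_iff: "c \<in> {0..<\<beta>} \<Longrightarrow> x \<in> {0..1} \<Longrightarrow> g c \<le> g x \<longleftrightarrow> x \<le> c"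
proof
  assume c: "c \<in> {0..<\<beta>}" and x: "x \<in> {0..1}" and "g c \<le> g x"
  show "x \<le> c"
  proof (rule ccontr)
    assume "\<not> x \<le> c"
    then have "g x < g c"
      using g_strict_antimono[of c x] g_eq_0[of x] g_pos[of c] c x \<beta>_mem
      by (cases "x \<le> \<beta>") auto
    with \<open>g c \<le> g x\<close> show False by simp
  qed
next
  assume "c \<in> {0..<\<beta>}" "x \<in> {0..1}" "x \<le> c"
  then show "g c \<le> g x" using g_antimono[of x c] \<beta>_mem by simp
qed

text \<open>Every \<open>x\<close> satisfies \<open>0 \<le> g x\<close>, so \<open>gstar g 0 = 1\<close>; redefining the value at \<open>0\<close>
  as \<open>\<beta>\<close> makes \<open>\<phi>\<close> continuous without changing any integral.\<close>
definition \<phi> :: "real \<Rightarrow> real" where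
  "\<phi> y = (if y = 0 then \<beta> else gstar g y)"

lemma \<phi>_g: "c \<in> {0..\<beta>} \<Longrightarrow> \<phi> (g c) = c"
proof (cases "c = \<beta>")
  case True
  then show ?thesis using g_\<beta> by (simp add: \<phi>_def)
next
  case False
  assume "c \<in> {0..\<beta>}"
  with False have c: "c \<in> {0..<\<beta>}" by simp
  with \<beta>_mem have "{x\<in>{0..1}. g c \<le> g x} = {0..c}" by (auto simp: g_le_g_iff)
  moreover have "g c \<noteq> 0" using g_pos[of c] c \<beta>_mem by simp
  ultimately show ?thesis using c by (simp add: \<phi>_def gstar_def)
qed

lemma \<phi>_mem: "y \<in> {0..1} \<Longrightarrow> \<phi> y \<in> {0..\<beta>}"
  and g_\<phi>: "y \<in> {0..1} \<Longrightarrow> g (\<phi> y) = y"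
proof -
  assume "y \<in> {0..1}"
  moreover have "continuous_on {0..\<beta>} g"
    using g_cont by (rule continuous_on_subset) (use \<beta>_mem in auto)
  ultimately obtain c where "c \<in> {0..\<beta>}" "g c = y"
    using IVT2'[of g \<beta> y 0] g_0 g_\<beta> \<beta>_pos by auto
  then show "\<phi> y \<in> {0..\<beta>}" "g (\<phi> y) = y" using \<phi>_g by auto
qed

lemma \<phi>_0: "\<phi> 0 = \<beta>"
  by (simp add: \<phi>_def)

lemma \<phi>_1: "\<phi> 1 = 0"
  using \<phi>_g[of 0] g_0 \<beta>_pos by simp

lemma le_g_iff_le_\<phi>: "x \<in> {0..1} \<Longrightarrow> y \<in> {0<..1} \<Longrightarrow> y \<le> g x \<longleftrightarrow> x \<le> \<phi> y"
proof -
  assume x: "x \<in> {0..1}" and y: "y \<in> {0<..1}"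
  then have "\<phi> y \<noteq> \<beta>" using g_\<phi>[of y] g_\<beta> by auto
  then have "\<phi> y \<in> {0..<\<beta>}" using \<phi>_mem[of y] y by auto
  then show ?thesis using g_le_g_iff[of "\<phi> y" x] g_\<phi>[of y] x y by simp
qed

lemma \<phi>_le_if_g_le:
  assumes w: "w \<in> {0..\<beta>}" and z: "z \<in> {0..1}" and "g w \<le> z"
  shows "\<phi> z \<le> w"
proof (rule ccontr)
  assume "\<not> \<phi> z \<le> w"
  then have "g (\<phi> z) < g w" using g_strict_antimono[of w "\<phi> z"] w \<phi>_mem[OF z] by auto
  with \<open>g w \<le> z\<close> show False using g_\<phi>[OF z] by simp
qed

lemma \<phi>_strict_antimono: "strict_antimono_on {0..1} \<phi>"
proof (rule monotone_onI)
  fix x y :: real assume x: "x \<in> {0..1}" and y: "y \<in> {0..1}" and "x < y"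
  show "\<phi> y < \<phi> x"
  proof (rule ccontr)
    assume "\<not> \<phi> y < \<phi> x"
    then have "g (\<phi> y) \<le> g (\<phi> x)"
      using g_antimono \<phi>_mem[OF x] \<phi>_mem[OF y] \<beta>_mem by simp
    with \<open>x < y\<close> show False using g_\<phi>[OF x] g_\<phi>[OF y] by simp
  qed
qed

lemma \<phi>_antimono: "antimono_on {0..1} \<phi>"
proof (rule monotone_onI)
  fix x y :: real assume "x \<in> {0..1}" "y \<in> {0..1}" "x \<le> y"
  then show "\<phi> y \<le> \<phi> x"
    using monotone_onD[OF \<phi>_strict_antimono, of x y] by (cases "x = y") auto
qed

lemma \<phi>_cont: "continuous_on {0..1} \<phi>"
proof -
  have "g ` {0..\<beta>} = {0..1}"
  proof
    show "g ` {0..\<beta>} \<subseteq> {0..1}" using g_nonneg g_le_1 \<beta>_mem by auto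
    show "{0..1} \<subseteq> g ` {0..\<beta>}" using \<phi>_mem g_\<phi> by (metis image_eqI subsetI)
  qed
  moreover have "continuous_on (g ` {0..\<beta>}) \<phi>"
    using \<phi>_g continuous_on_subset[OF g_cont] \<beta>_mem by (intro continuous_on_inv) auto
  ultimately show ?thesis by simp
qed

lemma \<phi>_convex: "convex_on {0..1} \<phi>"
proof (rule convex_onI)
  fix t x y :: real assume t: "0 < t" "t < 1" and x: "x \<in> {0..1}" and y: "y \<in> {0..1}"
  define w where "w = (1 - t) * \<phi> x + t * \<phi> y"
  define z where "z = (1 - t) * x + t * y"
  have "w \<in> {0..\<beta>}"
    unfolding w_def using \<phi>_mem[OF x] \<phi>_mem[OF y] t by (intro convex_combination_in_Icc) auto
  moreover have "z \<in> {0..1}"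
    unfolding z_def using x y t by (intro convex_combination_in_Icc) auto
  moreover have "g w \<le> z"
    using convex_onD[OF g_convex, of t "\<phi> x" "\<phi> y"] t \<phi>_mem[OF x] \<phi>_mem[OF y] \<beta>_mem
    by (simp add: w_def z_def g_\<phi>[OF x] g_\<phi>[OF y])
  ultimately have "\<phi> z \<le> w" by (rule \<phi>_le_if_g_le)
  then show "\<phi> ((1 - t) *\<^sub>R x + t *\<^sub>R y) \<le> (1 - t) * \<phi> x + t * \<phi> y"
    by (simp add: w_def z_def)
qed simp

lemma \<phi>_lower: "y \<in> {0..1} \<Longrightarrow> \<alpha> * (1 - y) \<le> \<phi> y"
  using \<alpha>_line_below_g[of "\<phi> y"] \<phi>_mem[of y] g_\<phi>[of y] \<beta>_mem by (simp add: algebra_simps)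

lemma \<phi>_upper: "y \<in> {0..1} \<Longrightarrow> \<phi> y \<le> \<beta> * (1 - y)"
proof (rule \<phi>_le_if_g_le)
  assume "y \<in> {0..1}"
  then show "\<beta> * (1 - y) \<in> {0..\<beta>}" using \<beta>_pos by (simp add: mult_le_cancel_left1)
  then show "g (\<beta> * (1 - y)) \<le> y" using g_le_chord[of "\<beta> * (1 - y)"] \<beta>_pos by simp
qed

lemma \<phi>_has_integral: "(\<phi> has_integral \<gamma>) {0..1}"
proof -
  define G where "G x = g (max 0 (min 1 x))" for x
  have G_g: "x \<in> {0..1} \<Longrightarrow> G x = g x" for x by (simp add: G_def)
  have "continuous_on UNIV G"
    unfolding G_def by (rule continuous_on_compose2[OF g_cont]) (auto intro!: continuous_intros)
  then have G_meas: "G \<in> borel_measurable borel" by (rule borel_measurable_continuous_onI)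
  have "(g has_integral \<gamma>) {0..1}"
    unfolding \<gamma>_def using g_cont by (intro integrable_integral integrable_continuous_interval)
  then have G_int: "(G has_integral \<gamma>) {0..1}" by (rule has_integral_eq[rotated]) (simp add: G_g)
  have \<phi>_int: "(\<phi> has_integral integral {0..1} \<phi>) {0..1}"
    using \<phi>_cont by (intro integrable_integral integrable_continuous_interval)
  then have \<phi>_int': "(\<phi> has_integral integral {0..1} \<phi>) {0<..1}"
    by (subst has_integral_spike_set_eq[where T = "{0..1}"]) (auto intro: negligible_subset[of "{0}"])
  have G_range: "0 \<le> G x \<and> G x \<le> 1" if "x \<in> {0..1}" for x
    using that g_nonneg g_le_1 by (simp add: G_g)
  have \<phi>_range: "0 \<le> \<phi> y \<and> \<phi> y \<le> 1" if "y \<in> {0<..1}" for y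
    using that \<phi>_mem[of y] \<beta>_mem by auto
  have galois: "y \<le> G x \<longleftrightarrow> x \<le> \<phi> y" if "x \<in> {0..1}" "y \<in> {0<..1}" for x y
    using that le_g_iff_le_\<phi> by (simp add: G_g)
  have "\<gamma> = integral {0..1} \<phi>"
    by (rule has_integral_generalized_inverse[OF G_meas G_range \<phi>_range galois G_int \<phi>_int'])
  with \<phi>_int show ?thesis by simp
qed

lemma \<gamma>_lower: "\<alpha> \<le> 2 * \<gamma>"
  using has_integral_le[OF has_integral_ramp(1)[of \<alpha>] \<phi>_has_integral] \<phi>_lower by simp

lemma \<gamma>_upper: "2 * \<gamma> \<le> \<beta>"
  using has_integral_le[OF \<phi>_has_integral has_integral_ramp(1)[of \<beta>]] \<phi>_upper by simp

lemma \<gamma>_pos: "0 < \<gamma>"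
  using \<gamma>_lower \<alpha>_pos by simp

definition \<phi>_moment :: real where
  "\<phi>_moment = integral {0..1} (\<lambda>y. y * \<phi> y)"

lemma \<phi>_moment_has_integral: "((\<lambda>y. y * \<phi> y) has_integral \<phi>_moment) {0..1}"
  unfolding \<phi>_moment_def
  by (intro integrable_integral integrable_continuous_interval continuous_intros \<phi>_cont)

lemma \<alpha>_eq_2\<gamma>_imp_\<beta>_eq_2\<gamma>:
  assumes "\<alpha> = 2 * \<gamma>"
  shows "2 * \<gamma> = \<beta>"
proof -
  have "((\<lambda>y. \<phi> y - \<alpha> * (1 - y)) has_integral 0) {0..1}"
    using has_integral_diff[OF \<phi>_has_integral has_integral_ramp(1)[of \<alpha>]] assms by simp
  then have "\<phi> 0 - \<alpha> * (1 - 0) = 0"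
    using \<phi>_lower by (intro has_integral_0_Icc_imp_0) (auto intro!: continuous_intros \<phi>_cont)
  with assms show ?thesis by (simp add: \<phi>_0)
qed

lemma \<phi>_linear_if_2\<gamma>_eq_\<beta>:
  assumes "2 * \<gamma> = \<beta>" and "y \<in> {0..1}"
  shows "\<phi> y = \<beta> * (1 - y)"
proof -
  have "((\<lambda>y. \<beta> * (1 - y) - \<phi> y) has_integral 0) {0..1}"
    using has_integral_diff[OF has_integral_ramp(1)[of \<beta>] \<phi>_has_integral]
    by (simp flip: assms(1))
  then have "\<beta> * (1 - y) - \<phi> y = 0"
    using \<phi>_upper assms(2) by (intro has_integral_0_Icc_imp_0) (auto intro!: continuous_intros \<phi>_cont)
  then show ?thesis by simp
qed

lemma \<phi>_moment_if_2\<gamma>_eq_\<beta>: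
  assumes "2 * \<gamma> = \<beta>"
  shows "\<phi>_moment = \<gamma> / 3"
proof -
  have "((\<lambda>y. y * \<phi> y) has_integral \<beta> / 6) {0..1}"
    using has_integral_ramp(2)[of \<beta>] by (rule has_integral_eq[rotated]) (simp add: \<phi>_linear_if_2\<gamma>_eq_\<beta>[OF assms])
  with \<phi>_moment_has_integral have "\<phi>_moment = \<beta> / 6" by (rule has_integral_unique)
  with assms show ?thesis by simp
qed

lemma \<phi>_moment_lower: "\<alpha> / 6 \<le> \<phi>_moment"
  using \<phi>_lower
  by (intro has_integral_le[OF has_integral_ramp(2)[of \<alpha>] \<phi>_moment_has_integral] mult_left_mono) auto

lemma \<phi>_moment_upper: "\<phi>_moment \<le> \<gamma> / 3"
proof -
  define d where "d = (\<lambda>y. 2 * \<gamma> * (1 - y) - \<phi> y)"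
  have "(d has_integral 0) {0..1}"
    using has_integral_diff[OF has_integral_ramp(1)[of "2 * \<gamma>"] \<phi>_has_integral]
    by (simp add: d_def)
  moreover have "((\<lambda>y. y * d y) has_integral \<gamma> / 3 - \<phi>_moment) {0..1}"
    using has_integral_diff[OF has_integral_ramp(2)[of "2 * \<gamma>"] \<phi>_moment_has_integral]
    by (simp add: d_def algebra_simps)
  moreover have "0 \<le> d y"
    if x: "x \<in> {0..1}" and y: "y \<in> {0..1}" and "x \<le> y" and "0 < d x" for x y
  proof -
    have "convex_on {x..1} (\<lambda>y. \<phi> y + 2 * \<gamma> * y + - 2 * \<gamma>)"
      using x by (intro convex_on_add_affine convex_on_subset[OF \<phi>_convex]) auto
    from convex_on_le_max[OF this, of y] y \<open>x \<le> y\<close>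
    have "\<phi> y + 2 * \<gamma> * y - 2 * \<gamma> \<le> max (\<phi> x + 2 * \<gamma> * x - 2 * \<gamma>) (\<phi> 1)"
      by simp
    with \<open>0 < d x\<close> show ?thesis by (simp add: d_def \<phi>_1 algebra_simps)
  qed
  ultimately have "0 \<le> \<gamma> / 3 - \<phi>_moment" by (rule has_integral_first_moment_nonneg)
  then show ?thesis by simp
qed

lemma \<phi>_minus_tent_sign_change:
  fixes t :: real
  defines "D \<equiv> \<lambda>y. \<phi> y - \<alpha> * (1 - y) - (\<beta> - \<alpha>) * max 0 (1 - y / t)"
  assumes t: "0 < t" and x: "x \<in> {0..1}" and y: "y \<in> {0..1}" and "x \<le> y" and "0 < D x"
  shows "0 \<le> D y"
proof (cases "t \<le> y")
  case True
  with t have "1 \<le> y / t" by (simp add: le_divide_eq)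
  then have "D y = \<phi> y - \<alpha> * (1 - y)" by (simp add: D_def)
  with \<phi>_lower[OF y] show ?thesis by simp
next
  case False
  define D' where "D' = (\<lambda>y. \<phi> y + (\<alpha> + (\<beta> - \<alpha>) / t) * y + - \<beta>)"
  have D_eq: "D u = D' u" if "u \<le> t" for u
  proof -
    from that t have "max 0 (1 - u / t) = 1 - u / t" by simp
    then have "D u = \<phi> u - \<alpha> * (1 - u) - (\<beta> - \<alpha>) * (1 - u / t)" by (simp add: D_def)
    with t show ?thesis by (simp add: D'_def field_simps)
  qed
  have "convex_on {0..y} D'"
    unfolding D'_def using y by (intro convex_on_add_affine convex_on_subset[OF \<phi>_convex]) auto
  from convex_on_le_max[OF this, of x] x \<open>x \<le> y\<close>
  have "D' x \<le> max (D' 0) (D' y)" by simp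
  moreover have "D' 0 = 0" by (simp add: D'_def \<phi>_0)
  ultimately show ?thesis using \<open>0 < D x\<close> D_eq[of x] D_eq[of y] False \<open>x \<le> y\<close> by simp
qed

lemma \<phi>_moment_tent_bound:
  assumes t: "0 < t" "t \<le> 1" and tent_mass: "2 * \<gamma> = \<alpha> + (\<beta> - \<alpha>) * t"
  shows "\<alpha> + (\<beta> - \<alpha>) * t^2 \<le> 6 * \<phi>_moment"
proof -
  define D where "D = (\<lambda>y. \<phi> y - \<alpha> * (1 - y) - (\<beta> - \<alpha>) * max 0 (1 - y / t))"
  have "(D has_integral \<gamma> - \<alpha> / 2 - (\<beta> - \<alpha>) * (t / 2)) {0..1}"
    unfolding D_def
    by (intro has_integral_diff \<phi>_has_integral has_integral_ramp has_integral_mult_right has_integral_tent t)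
  moreover have "\<gamma> - \<alpha> / 2 - (\<beta> - \<alpha>) * (t / 2) = 0"
    using tent_mass by simp
  ultimately have D_int: "(D has_integral 0) {0..1}" by metis
  have "((\<lambda>y. y * \<phi> y - y * (\<alpha> * (1 - y)) - (\<beta> - \<alpha>) * (y * max 0 (1 - y / t)))
      has_integral \<phi>_moment - \<alpha> / 6 - (\<beta> - \<alpha>) * (t^2 / 6)) {0..1}"
    by (intro has_integral_diff \<phi>_moment_has_integral has_integral_ramp has_integral_mult_right
        has_integral_tent t)
  then have moment_int:
    "((\<lambda>y. y * D y) has_integral \<phi>_moment - \<alpha> / 6 - (\<beta> - \<alpha>) * (t^2 / 6)) {0..1}"
    by (rule has_integral_eq[rotated]) (simp add: D_def right_diff_distrib mult.left_commute)
  have "0 \<le> \<phi>_moment - \<alpha> / 6 - (\<beta> - \<alpha>) * (t^2 / 6)"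
    using D_int moment_int \<phi>_minus_tent_sign_change[OF t(1)]
    unfolding D_def by (rule has_integral_first_moment_nonneg)
  then show ?thesis by simp
qed

lemma \<phi>_moment_lower_sharp: "\<alpha> * \<beta> - 4 * \<alpha> * \<gamma> + 4 * \<gamma>^2 \<le> 6 * (\<beta> - \<alpha>) * \<phi>_moment"
proof (cases "\<alpha> = 2 * \<gamma>")
  case True
  then have "\<beta> = \<alpha>" using \<alpha>_eq_2\<gamma>_imp_\<beta>_eq_2\<gamma> by simp
  with True show ?thesis by (simp add: power2_eq_square)
next
  case False
  define b where "b = \<beta> - \<alpha>"
  define t where "t = (2 * \<gamma> - \<alpha>) / b"
  have "0 < 2 * \<gamma> - \<alpha>" "2 * \<gamma> - \<alpha> \<le> b"
    using False \<gamma>_lower \<gamma>_upper by (simp_all add: b_def)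
  then have b: "0 < b" and t: "0 < t" "t \<le> 1" by (simp_all add: t_def)
  have bt: "b * t = 2 * \<gamma> - \<alpha>"
    using b by (simp add: t_def)
  then have "\<alpha> + b * t^2 \<le> 6 * \<phi>_moment"
    using \<phi>_moment_tent_bound[OF t] by (simp add: b_def)
  then have "b * (\<alpha> + b * t^2) \<le> b * (6 * \<phi>_moment)"
    using b by (intro mult_left_mono) auto
  moreover have "\<alpha> * \<beta> - 4 * \<alpha> * \<gamma> + 4 * \<gamma>^2 = b * (\<alpha> + b * t^2)"
  proof -
    have "\<alpha> * \<beta> - 4 * \<alpha> * \<gamma> + 4 * \<gamma>^2 = b * \<alpha> + (b * t)^2"
      unfolding bt by (simp add: b_def power2_eq_square algebra_simps)
    then show ?thesis by (simp add: power2_eq_square algebra_simps)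
  qed
  ultimately show ?thesis by (simp add: b_def algebra_simps)
qed

lemma Tg_eq: "T g x = integral {x..1} \<phi> / \<gamma>"
proof -
  have "integral {x..1} (gstar g) = integral {x..1} \<phi>"
    by (rule integral_spike[of "{0}"]) (auto simp: \<phi>_def)
  then show ?thesis by (simp add: T_def \<gamma>_def)
qed

definition Tg' :: "real \<Rightarrow> real" where
  "Tg' x = - \<phi> x / \<gamma>"

lemma Tg_has_derivative: "x \<in> {0..1} \<Longrightarrow> (T g has_real_derivative Tg' x) (at x within {0..1})"
  unfolding Tg_eq[abs_def] Tg'_def
  by (rule DERIV_cdivide, rule integral_has_real_derivative'[OF \<phi>_cont])

lemma Tg_cont: "continuous_on {0..1} (T g)"
  by (rule DERIV_continuous_on[OF Tg_has_derivative])

lemma Tg_0: "T g 0 = 1"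
  using integral_unique[OF \<phi>_has_integral] \<gamma>_pos by (simp add: Tg_eq)

lemma Tg_1: "T g 1 = 0"
  by (simp add: Tg_eq)

lemma Tg_strict_antimono:
  assumes x: "x \<in> {0..1}" and y: "y \<in> {0..1}" and "x < y"
  shows "T g y < T g x"
proof (rule DERIV_neg_imp_decreasing_open[OF \<open>x < y\<close>])
  fix z assume "x < z" "z < y"
  with x y have z: "z \<in> {0<..<1}" by simp
  then have "z \<in> interior {0..1}" by simp
  then have "at z within {0..1} = at z" by (rule at_within_interior)
  moreover have "(T g has_real_derivative Tg' z) (at z within {0..1})"
    using z by (intro Tg_has_derivative) simp
  ultimately have "(T g has_real_derivative Tg' z) (at z)" by simp
  moreover have "0 < \<alpha> * (1 - z)" "\<alpha> * (1 - z) \<le> \<phi> z"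
    using z \<alpha>_pos \<phi>_lower[of z] by simp_all
  then have "Tg' z < 0" using \<gamma>_pos by (simp add: Tg'_def divide_pos_pos)
  ultimately show "\<exists>D. (T g has_real_derivative D) (at z) \<and> D < 0" by blast
next
  show "continuous_on {x..y} (T g)"
    using x y by (intro continuous_on_subset[OF Tg_cont]) auto
qed

lemma Tg_convex: "convex_on {0..1} (T g)"
  unfolding Tg_eq[abs_def] using \<gamma>_pos
  by (intro convex_on_cdiv convex_on_tail_integral \<phi>_cont \<phi>_antimono) simp

lemma Tg_has_integral: "(T g has_integral \<phi>_moment / \<gamma>) {0..1}"
proof -
  have "((\<lambda>x. T g x + x * Tg' x) has_integral 1 * T g 1 - 0 * T g 0) {0..1}"
  proof (rule fundamental_theorem_of_calculus)
    fix x :: real assume "x \<in> {0..1}"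
    then show "((\<lambda>x. x * T g x) has_vector_derivative T g x + x * Tg' x) (at x within {0..1})"
      unfolding has_real_derivative_iff_has_vector_derivative[symmetric]
      by (auto intro!: derivative_eq_intros Tg_has_derivative)
  qed simp
  then have "((\<lambda>x. T g x - x * \<phi> x / \<gamma>) has_integral 0) {0..1}"
    by (simp add: Tg_1 Tg'_def)
  from has_integral_add[OF this has_integral_divide[OF \<phi>_moment_has_integral, of \<gamma>]]
  show ?thesis by simp
qed

lemma integral_Tg: "integral {0..1} (T g) = \<phi>_moment / \<gamma>"
  using Tg_has_integral by (rule integral_unique)

lemma Tg_above_tangent: "x \<in> {0..1} \<Longrightarrow> 1 - \<beta> / \<gamma> * x \<le> T g x"
proof -
  assume x: "x \<in> {0..1}"
  have "integral {0..x} \<phi> + integral {x..1} \<phi> = \<gamma>"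
    using x integral_unique[OF \<phi>_has_integral]
      Henstock_Kurzweil_Integration.integral_combine[OF _ _ has_integral_integrable[OF \<phi>_has_integral]]
    by simp
  moreover have "integral {0..x} \<phi> \<le> \<beta> * x"
    using integral_antimono_on_bounds(2)[of 0 x \<phi>] x \<phi>_0
      continuous_on_subset[OF \<phi>_cont] monotone_on_subset[OF \<phi>_antimono]
    by (simp add: mult.commute)
  ultimately have "\<gamma> - \<beta> * x \<le> integral {x..1} \<phi>" by linarith
  then have "(\<gamma> - \<beta> * x) / \<gamma> \<le> T g x"
    unfolding Tg_eq using \<gamma>_pos by (rule divide_right_mono[OF _ less_imp_le])
  with \<gamma>_pos show ?thesis by (simp add: diff_divide_distrib)
qed

lemma Tg'_cont: "continuous_on {0..1} Tg'"
  unfolding Tg'_def using \<gamma>_pos by (intro continuous_intros \<phi>_cont) simp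

lemma Tg'_0: "Tg' 0 = - \<beta> / \<gamma>"
  by (simp add: Tg'_def \<phi>_0)

lemma Tg'_1: "Tg' 1 = 0"
  by (simp add: Tg'_def \<phi>_1)

lemma Tg'_nonpos: "x \<in> {0..1} \<Longrightarrow> Tg' x \<le> 0"
  using \<phi>_mem[of x] \<gamma>_pos by (simp add: Tg'_def)

lemma Tg'_bounds:
  assumes "x \<in> {0..1}"
  shows "\<beta> / \<gamma> * (x - 1) \<le> Tg' x" and "Tg' x \<le> \<alpha> / \<gamma> * (x - 1)"
proof -
  have "\<beta> * (x - 1) \<le> - \<phi> x" "- \<phi> x \<le> \<alpha> * (x - 1)"
    using \<phi>_upper[OF assms] \<phi>_lower[OF assms] by (simp_all add: algebra_simps)
  from this[THEN divide_right_mono, OF less_imp_le[OF \<gamma>_pos]]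
  show "\<beta> / \<gamma> * (x - 1) \<le> Tg' x" "Tg' x \<le> \<alpha> / \<gamma> * (x - 1)"
    by (simp_all add: Tg'_def)
qed

lemma Tg'_strict_mono: "strict_mono_on {0..1} Tg'"
  using monotone_onD[OF \<phi>_strict_antimono] \<gamma>_pos
  by (intro monotone_onI) (simp add: Tg'_def divide_strict_right_mono)

lemma Tg'_concave: "concave_on {0..1} Tg'"
  unfolding concave_on_def Tg'_def using \<gamma>_pos by (simp add: convex_on_cdiv \<phi>_convex)

lemma stride_Tg: "stride (T g) = \<gamma> / \<beta>"
proof -
  have "(T g has_real_derivative - (\<beta> / \<gamma>)) (at 0 within {0..1})"
    using Tg_has_derivative[of 0] by (simp add: Tg'_0)
  then have "stride (T g) = 1 / (\<beta> / \<gamma>)"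
    using \<beta>_pos \<gamma>_pos Tg_0 Tg_above_tangent by (intro stride_eq_inverse_slope) auto
  then show ?thesis by simp
qed

lemma Tg_classE: "classE (T g)"
  unfolding classE_def decreasing01_def
proof (intro conjI ballI impI)
  show "T g \<in> borel_measurable (lebesgue_on {0..1})"
    by (rule continuous_imp_measurable_on_sets_lebesgue[OF Tg_cont]) simp
  show "T g 0 = 1" by (rule Tg_0)
  show "0 < integral {0..1} (T g)"
    using \<phi>_moment_lower \<alpha>_pos \<gamma>_pos by (simp add: integral_Tg)
next
  fix x y :: real assume "x \<in> {0..1}" "y \<in> {0..1}" "x \<le> y"
  then show "T g y \<le> T g x" using Tg_strict_antimono[of x y] by (cases "x = y") auto
next
  fix x :: real assume "x \<in> {0..1}"
  then show "0 \<le> T g x" using Tg_strict_antimono[of x 1] Tg_1 by (cases "x = 1") auto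
qed

lemma Tg_classDsharpconv: "classDsharpconv (T g)"
proof -
  have "classD (T g)"
    using Tg_classE Tg_cont Tg_1 Tg_strict_antimono by (simp add: classD_def classC_def)
  moreover have "(Tg' \<longlongrightarrow> Tg' 0) (at_right 0)"
    using Tg'_cont by (rule continuous_on_Icc_at_rightD) simp
  moreover have "continuous_on {0<..1} Tg'"
    using Tg'_cont by (rule continuous_on_subset) auto
  moreover have "Tg' 0 \<le> 0" by (rule Tg'_nonpos) simp
  ultimately show ?thesis
    unfolding classDsharpconv_def classDsharp_def classCconv_def
    using Tg_has_derivative Tg'_1 Tg_convex classD_def
    by (intro conjI exI[of _ Tg'] exI[of _ "Tg' 0"]) auto
qed

end

theorem lemma2p4:
  fixes g :: "real \<Rightarrow> real" and \<alpha> \<beta> \<gamma> :: real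
  assumes hg: "classCconv g"
    and h\<alpha>: "0 < \<alpha>" "\<alpha> \<le> stride g"
    and h\<beta>: "\<beta> = Inf {x\<in>{0..1}. g x = 0}"
    and h\<gamma>: "\<gamma> = integral {0..1} g"
  shows "(\<alpha> \<le> 2 * \<gamma> \<and> 2 * \<gamma> \<le> \<beta> \<and> \<beta> \<le> 1
          \<and> (\<alpha> = 2 * \<gamma> \<longrightarrow> 2 * \<gamma> = \<beta>)
          \<and> (2 * \<gamma> = \<beta> \<longrightarrow> integral {0..1} (T g) = 1/3))
       \<and> (\<exists>h. (\<forall>x\<in>{0..1}. (T g has_real_derivative h x) (at x within {0..1}))
              \<and> (\<forall>x\<in>{0..1}. h x \<le> 0)
              \<and> continuous_on {0..1} h \<and> strict_mono_on {0..1} h \<and> concave_on {0..1} h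
              \<and> (\<forall>x\<in>{0..1}. \<beta> / \<gamma> * (x - 1) \<le> h x \<and> h x \<le> \<alpha> / \<gamma> * (x - 1)))
       \<and> (classDsharpconv (T g) \<and> stride (T g) = \<gamma> / \<beta>)
       \<and> integral {0..1} (T g) \<le> 1/3
       \<and> \<alpha> * \<beta> - 4 * \<alpha> * \<gamma> + 4 * \<gamma>^2 \<le> 6 * (\<beta> - \<alpha>) * \<gamma> * integral {0..1} (T g)"
proof -
  interpret convex_stride_profile g \<alpha> \<beta> \<gamma>
    using assms by unfold_locales
  have "\<exists>h. (\<forall>x\<in>{0..1}. (T g has_real_derivative h x) (at x within {0..1}))
      \<and> (\<forall>x\<in>{0..1}. h x \<le> 0)
      \<and> continuous_on {0..1} h \<and> strict_mono_on {0..1} h \<and> concave_on {0..1} h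
      \<and> (\<forall>x\<in>{0..1}. \<beta> / \<gamma> * (x - 1) \<le> h x \<and> h x \<le> \<alpha> / \<gamma> * (x - 1))"
    using Tg_has_derivative Tg'_nonpos Tg'_cont Tg'_strict_mono Tg'_concave Tg'_bounds
    by (intro exI[of _ Tg']) blast
  moreover have "integral {0..1} (T g) \<le> 1/3"
    using \<phi>_moment_upper \<gamma>_pos by (simp add: integral_Tg field_simps)
  moreover have "\<alpha> * \<beta> - 4 * \<alpha> * \<gamma> + 4 * \<gamma>^2 \<le> 6 * (\<beta> - \<alpha>) * \<gamma> * integral {0..1} (T g)"
    using \<phi>_moment_lower_sharp \<gamma>_pos by (simp add: integral_Tg)
  ultimately show ?thesis
    using \<gamma>_lower \<gamma>_upper \<beta>_mem \<alpha>_eq_2\<gamma>_imp_\<beta>_eq_2\<gamma> \<phi>_moment_if_2\<gamma>_eq_\<beta> \<gamma>_pos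
      Tg_classDsharpconv stride_Tg
    by (simp add: integral_Tg)
qed

end
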